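(* Let $N\in\mathbb{N}$, Polish spaces $(\mathcal{X}_i,d_{\mathcal{X}_i})$, $\boldsymbol{\mathcal{X}}:=\mathcal{X}_1\times\cdots\times\mathcal{X}_N$, $\mu_i\in\mathcal{P}_1(\mathcal{X}_i)$, and $f:\boldsymbol{\mathcal{X}}\to\mathbb{R}$ lower semi-continuous admitting upper semi-continuous $h_i\in\mathcal{L}^1(\mathcal{X}_i,\mu_i)$ with $\sum_ih_i(x_i)\le f(\boldsymbol{x})$ for all $\boldsymbol{x}$. Let $\mathcal{G}_i=\{g_{i,1},\ldots,g_{i,m_i}\}\subset\mathcal{L}^1(\mathcal{X}_i,\mu_i)$, $m_i\in\mathbb{N}$, $m:=\sum_im_i$; let $\boldsymbol{g}_i(x_i):=(g_{i,1}(x_i),\ldots,g_{i,m_i}(x_i))^\top$, $\boldsymbol{g}(\boldsymbol{x}):=(\boldsymbol{g}_1(x_1)^\top,\ldots,\boldsymbol{g}_N(x_N)^\top)^\top$, $\bar{\boldsymbol{g}}$ the vector of $\int g_{i,j}\,\mathrm{d}\mu_i$ in the same order, $K:=\operatorname{conv}(\{\boldsymbol{g}(\boldsymbol{x}):\boldsymbol{x}\in\boldsymbol{\mathcal{X}}\})$ and $C:=\operatorname{cone}(\{(1,\boldsymbol{g}(\boldsymbol{x})^\top,f(\boldsymbol{x}))^\top:\boldsymbol{x}\in\boldsymbol{\mathcal{X}}\})$. Then: (i) If for each $i$, $\operatorname{supp}(\mu_i)=\mathcal{X}_i$ and $g_{i,1},\ldots,g_{i,m_i}$ are continuous, then $\bar{\boldsymbol{g}}\in\operatorname{relint}(K)$.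 (ii) If, in addition to the assumptions of (i), for each $i$ there exist $x_{i,1},\ldots,x_{i,m_i+1}\in\mathcal{X}_i$ such that $\boldsymbol{g}_i(x_{i,1}),\ldots,\boldsymbol{g}_i(x_{i,m_i+1})$ are affinely independent, then $\bar{\boldsymbol{g}}\in\operatorname{int}(K)$. (iii) If for each $i$, $\mathcal{X}_i$ is compact and $\mathcal{G}_i$ contains only continuous functions, and $f$ is continuous, then $C$ is closed.
   Context: $\mathcal{P}_1(\mathcal{X}_i)$: Borel probability measures on $\mathcal{X}_i$ with finite first moment. $\operatorname{conv}$, $\operatorname{cone}$, $\operatorname{relint}$, $\operatorname{int}$ denote convex hull, conic hull, relative interior and interior. *)

theory Defs
  imports "HOL-Analysis.Analysis" "HOL-Probability.Probability"
begin

definition lsc_on :: "'a topology \<Rightarrow> ('a \<Rightarrow> real) \<Rightarrow> bool" where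
  "lsc_on X f \<longleftrightarrow> (\<forall>t. openin X {x \<in> topspace X. t < f x})"

definition usc_on :: "'a topology \<Rightarrow> ('a \<Rightarrow> real) \<Rightarrow> bool" where
  "usc_on X f \<longleftrightarrow> (\<forall>t. openin X {x \<in> topspace X. f x < t})"

definition measure_support :: "'a topology \<Rightarrow> 'a measure \<Rightarrow> 'a set" where
  "measure_support X \<mu> = {x \<in> topspace X. \<forall>U. openin X U \<and> x \<in> U \<longrightarrow> emeasure \<mu> U > 0}"

definition polish_metric :: "'a set \<Rightarrow> ('a \<Rightarrow> 'a \<Rightarrow> real) \<Rightarrow> bool" where
  "polish_metric M d \<longleftrightarrow> Metric_space M d \<and> Metric_space.mcomplete M d
      \<and> separable_space (Metric_space.mtopology M d)"

definition P1 :: "'a set \<Rightarrow> ('a \<Rightarrow> 'a \<Rightarrow> real) \<Rightarrow> 'a measure \<Rightarrow> bool" where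
  "P1 M d \<mu> \<longleftrightarrow> prob_space \<mu> \<and> space \<mu> = M
      \<and> sets \<mu> = sigma_sets M {U. openin (Metric_space.mtopology M d) U}
      \<and> (\<exists>x0\<in>M. integrable \<mu> (\<lambda>x. d x0 x))"

end

theory Submission
  imports Defs
begin

(* For a vector a, the functional a . g(x) splits as sum_i phi_i(x_i) with phi_i = a . g_i, and
   a . gbar = sum_i (integral of phi_i d mu_i).  If gbar maximises a . v over K, then fixing
   x_i and choosing every other x_j with phi_j(x_j) >= its mean shows phi_i <= its mean on all of
   X_i; so phi_i equals its mean almost everywhere and, by continuity and full support,
   everywhere.  Hence every hyperplane supporting K at gbar contains K, i.e. gbar lies in relint K.
   If in addition the values of g_i affinely span the coordinates of block i, a . v can only be
   constant on K for a = 0, so K has nonempty interior and relint K = int K.  For (iii) the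
   generators (1, g(x), f(x)) form a compact set inside the hyperplane {first coordinate = 1},
   and the cone over such a set is closed. *)

lemma (in prob_space) AE_eq_integral_if_le_integral:
  fixes f :: "'a \<Rightarrow> real"
  assumes f: "integrable M f" and le: "\<And>x. x \<in> space M \<Longrightarrow> f x \<le> integral\<^sup>L M f"
  shows "AE x in M. f x = integral\<^sup>L M f"
proof -
  let ?c = "integral\<^sup>L M f"
  have int: "integrable M (\<lambda>x. ?c - f x)" using f by auto
  have "integral\<^sup>L M (\<lambda>x. ?c - f x) = 0" using f by (simp add: prob_space)
  then have "AE x in M. ?c - f x = 0"
    using integral_nonneg_eq_0_iff_AE[OF int] le by (auto intro: AE_I2)
  then show ?thesis by auto
qed

lemma (in prob_space) exists_ge_integral:
  fixes f :: "'a \<Rightarrow> real"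
  assumes f: "integrable M f"
  shows "\<exists>x\<in>space M. integral\<^sup>L M f \<le> f x"
proof (rule ccontr)
  assume "\<not> ?thesis"
  then have lt: "\<And>x. x \<in> space M \<Longrightarrow> f x < integral\<^sup>L M f" by auto
  then have "AE x in M. f x = integral\<^sup>L M f"
    using f by (intro AE_eq_integral_if_le_integral) (auto intro: less_imp_le)
  then have "AE x in M. False" by (rule AE_mp) (auto dest: lt intro!: AE_I2)
  then show False by simp
qed

lemma le_integral_if_sum_le_sum_integrals:
  fixes \<phi> :: "'i \<Rightarrow> 'a \<Rightarrow> real"
  assumes I: "finite I"
    and prob: "\<And>i. i \<in> I \<Longrightarrow> prob_space (\<mu> i)"
    and space: "\<And>i. i \<in> I \<Longrightarrow> space (\<mu> i) = M i"
    and int: "\<And>i. i \<in> I \<Longrightarrow> integrable (\<mu> i) (\<phi> i)"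
    and le: "\<And>x. x \<in> PiE I M \<Longrightarrow>
      (\<Sum>i\<in>I. \<phi> i (x i)) \<le> (\<Sum>i\<in>I. integral\<^sup>L (\<mu> i) (\<phi> i))"
    and i: "i \<in> I" and y: "y \<in> M i"
  shows "\<phi> i y \<le> integral\<^sup>L (\<mu> i) (\<phi> i)"
proof -
  obtain w where w: "\<And>j. j \<in> I \<Longrightarrow> w j \<in> M j \<and> integral\<^sup>L (\<mu> j) (\<phi> j) \<le> \<phi> j (w j)"
    using prob_space.exists_ge_integral[OF prob int] space by metis
  define x where "x = (\<lambda>j. if j = i then y else if j \<in> I then w j else undefined)"
  have "x \<in> PiE I M" using w y i by (auto simp: x_def)
  moreover have "(\<Sum>j\<in>I-{i}. integral\<^sup>L (\<mu> j) (\<phi> j)) \<le> (\<Sum>j\<in>I-{i}. \<phi> j (x j))"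
    by (rule sum_mono) (use w in \<open>auto simp: x_def\<close>)
  moreover have "(\<Sum>j\<in>I. \<phi> j (x j)) = \<phi> i y + (\<Sum>j\<in>I-{i}. \<phi> j (x j))"
    using I i by (simp add: sum.remove x_def)
  moreover have "(\<Sum>j\<in>I. integral\<^sup>L (\<mu> j) (\<phi> j))
      = integral\<^sup>L (\<mu> i) (\<phi> i) + (\<Sum>j\<in>I-{i}. integral\<^sup>L (\<mu> j) (\<phi> j))"
    using I i by (simp add: sum.remove)
  ultimately show ?thesis using le[of x] by linarith
qed

lemma eq_on_measure_support_if_AE_eq:
  fixes f :: "'a \<Rightarrow> real"
  assumes sets: "\<And>U. openin X U \<Longrightarrow> U \<in> sets \<mu>"
    and cont: "continuous_map X euclideanreal f"
    and ae: "AE y in \<mu>. f y = c"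
    and x: "x \<in> measure_support X \<mu>"
  shows "f x = c"
proof (rule ccontr)
  assume "f x \<noteq> c"
  define U where "U = {y \<in> topspace X. f y \<in> - {c}}"
  have U: "openin X U"
    unfolding U_def using cont by (rule openin_continuous_map_preimage) auto
  have "AE y in \<mu>. y \<notin> U" using ae by eventually_elim (auto simp: U_def)
  then have "emeasure \<mu> U = 0" using AE_iff_null_sets[OF sets[OF U]] by auto
  moreover have "x \<in> U" using x \<open>f x \<noteq> c\<close> by (auto simp: U_def measure_support_def)
  ultimately show False using x U unfolding measure_support_def by force
qed

lemma in_rel_interior_if_no_proper_supporting_hyperplane:
  fixes K :: "'a::euclidean_space set"
  assumes K: "convex K" "K \<noteq> {}"
    and support: "\<And>a. \<forall>v\<in>K. a \<bullet> v \<le> a \<bullet> p \<Longrightarrow> \<forall>v\<in>K. a \<bullet> v = a \<bullet> p"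
  shows "p \<in> rel_interior K"
proof (rule ccontr)
  assume p: "p \<notin> rel_interior K"
  show False
  proof (cases "p \<in> closure K")
    case False
    then obtain a b where ab: "a \<bullet> p < b" "\<forall>v\<in>closure K. b < a \<bullet> v"
      using separating_hyperplane_closed_point[OF convex_closure[OF K(1)]] by blast
    then have lt: "(-a) \<bullet> v < (-a) \<bullet> p" if "v \<in> K" for v
      using that closure_subset by fastforce
    then have "\<forall>v\<in>K. (-a) \<bullet> v = (-a) \<bullet> p"
      using support[of "-a"] less_imp_le by blast
    with lt K(2) show False by (metis all_not_in_conv less_irrefl)
  next
    case True
    then obtain a where le: "\<And>v. v \<in> closure K \<Longrightarrow> a \<bullet> p \<le> a \<bullet> v"
      and lt: "\<And>v. v \<in> rel_interior K \<Longrightarrow> a \<bullet> p < a \<bullet> v"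
      using supporting_hyperplane_relative_frontier[OF K(1) _ p] by blast
    have "\<forall>v\<in>K. (-a) \<bullet> v \<le> (-a) \<bullet> p"
      using le closure_subset by fastforce
    then have eq: "\<forall>v\<in>K. (-a) \<bullet> v = (-a) \<bullet> p" by (rule support)
    obtain v where "v \<in> rel_interior K"
      using rel_interior_eq_empty K by blast
    with eq lt rel_interior_subset show False by fastforce
  qed
qed

lemma inner_eq_0_on_subspace_if_const_on_affine_basis:
  fixes P :: "'a::euclidean_space set"
  assumes V: "subspace V" "P \<subseteq> V"
    and P: "\<not> affine_dependent P" "card P = dim V + 1"
    and const: "\<And>p. p \<in> P \<Longrightarrow> a \<bullet> p = c"
    and v: "v \<in> V"
  shows "a \<bullet> v = 0"
proof -
  have "affine hull P = V"
  proof (rule affine_dim_equal)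
    show "aff_dim (affine hull P) = aff_dim V"
      using aff_dim_affine_independent[OF P(1)] P(2) aff_dim_subspace[OF V(1)] by simp
    show "affine hull P \<subseteq> V"
      using V by (simp add: hull_minimal subspace_imp_affine)
  qed (use P(2) subspace_imp_affine[OF V(1)] in auto)
  moreover have "affine hull P \<subseteq> {x. a \<bullet> x = c}"
    using const by (intro hull_minimal) (auto simp: affine_hyperplane)
  ultimately have "a \<bullet> 0 = c" "a \<bullet> v = c"
    using subspace_0[OF V(1)] v by auto
  then show ?thesis by simp
qed

lemma closed_convex_cone_hull_if_compact_fst_1:
  fixes S :: "(real \<times> 'a::euclidean_space) set"
  assumes S: "compact S" and fst: "\<And>p. p \<in> S \<Longrightarrow> fst p = 1"
  shows "closed (convex_cone hull S)"
proof -
  have "convex hull S \<subseteq> {p. fst p = 1}"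
    using fst by (intro hull_minimal) (auto simp: convex_def)
  then have "compact (convex hull S) \<and> 0 \<notin> convex hull S"
    using S compact_convex_hull by auto
  then have "closed (conic hull (convex hull S))" using closed_conic_hull by blast
  then show ?thesis by (simp add: convex_cone_hull_separate closed_insert)
qed

lemma continuous_map_vec_lambda:
  assumes "\<And>k. continuous_map X euclideanreal (h k)"
  shows "continuous_map X euclidean (\<lambda>x. (\<chi> k. h k x) :: real ^ 'n::finite)"
proof -
  have "(\<lambda>x. \<chi> k. h k x) = (\<lambda>x. \<Sum>k\<in>UNIV. h k x *\<^sub>R (axis k 1 :: real ^ 'n))"
    by (auto simp: vec_eq_iff axis_def if_distrib cong: if_cong)
  moreover have "continuous_map X euclidean (\<lambda>x. h k x *\<^sub>R (axis k 1 :: real ^ 'n))" for k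
  proof -
    have "continuous_on UNIV (\<lambda>r. r *\<^sub>R (axis k 1 :: real ^ 'n))"
      by (intro continuous_intros)
    then show ?thesis
      using continuous_map_compose[OF assms[of k], of euclidean "\<lambda>r. r *\<^sub>R axis k 1"]
      by (simp add: o_def)
  qed
  ultimately show ?thesis by (simp add: continuous_map_sum)
qed

locale moment_problem =
  fixes N :: nat and M :: "nat \<Rightarrow> 'a set" and T :: "nat \<Rightarrow> 'a topology"
    and \<mu> :: "nat \<Rightarrow> 'a measure"
    and owner :: "'m::finite \<Rightarrow> nat" and g :: "'m \<Rightarrow> 'a \<Rightarrow> real"
  assumes owner_less: "\<And>k. owner k < N"
    and prob: "\<And>i. i < N \<Longrightarrow> prob_space (\<mu> i)"
    and space_eq: "\<And>i. i < N \<Longrightarrow> space (\<mu> i) = M i"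
    and topspace_eq: "\<And>i. i < N \<Longrightarrow> topspace (T i) = M i"
    and openin_sets: "\<And>i U. i < N \<Longrightarrow> openin (T i) U \<Longrightarrow> U \<in> sets (\<mu> i)"
    and integrable_g: "\<And>k. integrable (\<mu> (owner k)) (g k)"
begin

(* moment, mean_moment and block_moment i are the paper's g, gbar and g_i, the latter padded
   with zeros outside the coordinates k with owner k = i. *)

definition moment :: "(nat \<Rightarrow> 'a) \<Rightarrow> real ^ 'm" where
  "moment x = (\<chi> k. g k (x (owner k)))"

definition mean_moment :: "real ^ 'm" where
  "mean_moment = (\<chi> k. integral\<^sup>L (\<mu> (owner k)) (g k))"

definition block_moment :: "nat \<Rightarrow> 'a \<Rightarrow> real ^ 'm" where
  "block_moment i y = (\<chi> k. if owner k = i then g k y else 0)"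

lemma inner_block_moment: "a \<bullet> block_moment i y = (\<Sum>k | owner k = i. a $ k * g k y)"
proof -
  have "a \<bullet> block_moment i y = (\<Sum>k\<in>UNIV. if owner k = i then a $ k * g k y else 0)"
    by (simp add: block_moment_def inner_vec_def if_distrib cong: if_cong)
  also have "\<dots> = (\<Sum>k | owner k = i. a $ k * g k y)"
    using sum.inter_filter[of UNIV "\<lambda>k. a $ k * g k y" "\<lambda>k. owner k = i"] by simp
  finally show ?thesis .
qed

lemma sum_blocks: "(\<Sum>k\<in>UNIV. F k) = (\<Sum>i<N. \<Sum>k | owner k = i. F k)"
proof -
  have "range owner \<subseteq> {..<N}" using owner_less by auto
  from sum.group[OF _ _ this, of F] show ?thesis by simp
qed

lemma inner_moment: "a \<bullet> moment x = (\<Sum>i<N. a \<bullet> block_moment i (x i))"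
proof -
  have "a \<bullet> moment x = (\<Sum>k\<in>UNIV. a $ k * g k (x (owner k)))"
    by (simp add: inner_vec_def moment_def)
  also have "\<dots> = (\<Sum>i<N. \<Sum>k | owner k = i. a $ k * g k (x i))"
    unfolding sum_blocks by (intro sum.cong refl) auto
  finally show ?thesis by (simp add: inner_block_moment)
qed

lemma integrable_inner_block_moment:
  "i < N \<Longrightarrow> integrable (\<mu> i) (\<lambda>y. a \<bullet> block_moment i y)"
  unfolding inner_block_moment using integrable_g by auto

lemma inner_mean_moment:
  "a \<bullet> mean_moment = (\<Sum>i<N. \<integral>y. a \<bullet> block_moment i y \<partial>\<mu> i)"
proof -
  have "a \<bullet> mean_moment = (\<Sum>k\<in>UNIV. a $ k * integral\<^sup>L (\<mu> (owner k)) (g k))"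
    by (simp add: inner_vec_def mean_moment_def)
  also have "\<dots> = (\<Sum>i<N. \<Sum>k | owner k = i. a $ k * integral\<^sup>L (\<mu> i) (g k))"
    unfolding sum_blocks by (intro sum.cong refl) auto
  also have "\<dots> = (\<Sum>i<N. \<integral>y. (\<Sum>k | owner k = i. a $ k * g k y) \<partial>\<mu> i)"
  proof (intro sum.cong refl)
    fix i
    show "(\<Sum>k | owner k = i. a $ k * integral\<^sup>L (\<mu> i) (g k))
        = (\<integral>y. (\<Sum>k | owner k = i. a $ k * g k y) \<partial>\<mu> i)"
      using integrable_g by (subst Bochner_Integration.integral_sum) auto
  qed
  finally show ?thesis by (simp add: inner_block_moment)
qed

lemma topspace_product: "topspace (product_topology T {..<N}) = PiE {..<N} M"
  using topspace_eq by (auto intro: PiE_cong)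

lemma continuous_map_moment:
  assumes "\<And>k. continuous_map (T (owner k)) euclideanreal (g k)"
  shows "continuous_map (product_topology T {..<N}) euclidean moment"
  unfolding moment_def
proof (rule continuous_map_vec_lambda)
  fix k
  show "continuous_map (product_topology T {..<N}) euclideanreal (\<lambda>x. g k (x (owner k)))"
  proof -
    have "continuous_map (product_topology T {..<N}) (T (owner k)) (\<lambda>x. x (owner k))"
      using owner_less by (intro continuous_map_product_projection) auto
    from continuous_map_compose[OF this assms[of k]] show ?thesis by (simp add: o_def)
  qed
qed

lemma PiE_nonempty: "PiE {..<N} M \<noteq> {}"
  using prob_space.not_empty[OF prob] space_eq by (simp add: PiE_eq_empty_iff)

lemma zero_on_block_if_inner_block_moment_const:
  assumes P: "P \<subseteq> block_moment i ` M i" "\<not> affine_dependent P"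
      "card P = card {k. owner k = i} + 1"
    and const: "\<And>y. y \<in> M i \<Longrightarrow> a \<bullet> block_moment i y = c"
    and k: "owner k = i"
  shows "a $ k = 0"
proof -
  let ?V = "{v::real ^ 'm. \<forall>k'. k' \<notin> {k. owner k = i} \<longrightarrow> v $ k' = 0}"
  have "a \<bullet> axis k 1 = 0"
  proof (rule inner_eq_0_on_subspace_if_const_on_affine_basis)
    show "subspace ?V" by (auto simp: subspace_def)
    show "P \<subseteq> ?V" using P(1) by (auto simp: block_moment_def)
    have "vec.dim ?V = card {k. owner k = i}" by (rule dim_substandard_cart)
    then show "card P = dim ?V + 1" using P(3) by (simp add: dim_vec_eq)
    show "a \<bullet> p = c" if "p \<in> P" for p using P(1) that const by auto
    show "axis k 1 \<in> ?V" using k by (simp add: axis_def)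
  qed (fact P(2))
  then show ?thesis by (simp add: inner_axis)
qed

lemma closed_lifted_moment_cone:
  assumes compact: "\<And>i. i < N \<Longrightarrow> compact_space (T i)"
    and continuous_g: "\<And>k. continuous_map (T (owner k)) euclideanreal (g k)"
    and continuous_f: "continuous_map (product_topology T {..<N}) euclideanreal f"
  shows "closed (convex_cone hull ((\<lambda>x. (1::real, moment x, f x)) ` PiE {..<N} M))"
proof (rule closed_convex_cone_hull_if_compact_fst_1)
  have "continuous_map (product_topology T {..<N})
      (prod_topology euclideanreal (prod_topology euclidean euclideanreal))
      (\<lambda>x. (1::real, moment x, f x))"
    using continuous_map_moment[OF continuous_g] continuous_f
    by (intro continuous_map_pairedI continuous_map_const[THEN iffD2]) simp_all
  then have "continuous_map (product_topology T {..<N}) euclidean (\<lambda>x. (1::real, moment x, f x))"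
    by simp
  moreover have "compact_space (product_topology T {..<N})"
    using compact by (simp add: compact_space_product_topology)
  ultimately have "compactin euclidean
      ((\<lambda>x. (1::real, moment x, f x)) ` topspace (product_topology T {..<N}))"
    unfolding compact_space_def by (rule image_compactin[rotated])
  then show "compact ((\<lambda>x. (1::real, moment x, f x)) ` PiE {..<N} M)"
    by (simp only: topspace_product compactin_euclidean_iff)
qed force

end

lemma moment_problem_mtopology:
  fixes M :: "nat \<Rightarrow> 'a set" and owner :: "'m::finite \<Rightarrow> nat"
  assumes "\<And>i. i < N \<Longrightarrow> polish_metric (M i) (d i)"
    and "\<And>i. i < N \<Longrightarrow> P1 (M i) (d i) (\<mu> i)"
    and "\<And>k. owner k < N"
    and "\<And>k. integrable (\<mu> (owner k)) (g k)"
  shows "moment_problem N M (\<lambda>i. Metric_space.mtopology (M i) (d i)) \<mu> owner g"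
proof (rule moment_problem.intro)
  fix i assume i: "i < N"
  then interpret Metric_space "M i" "d i" using assms(1) by (simp add: polish_metric_def)
  show "topspace (Metric_space.mtopology (M i) (d i)) = M i" by simp
  show "prob_space (\<mu> i)" "space (\<mu> i) = M i" using assms(2)[OF i] by (simp_all add: P1_def)
  show "U \<in> sets (\<mu> i)" if "openin (Metric_space.mtopology (M i) (d i)) U" for U
    using assms(2)[OF i] that by (auto simp: P1_def intro: sigma_sets.Basic)
qed (use assms in auto)

locale supported_moment_problem = moment_problem +
  assumes full_support: "\<And>i. i < N \<Longrightarrow> measure_support (T i) (\<mu> i) = M i"
    and continuous_g: "\<And>k. continuous_map (T (owner k)) euclideanreal (g k)"
begin

lemma continuous_inner_block_moment:
  "continuous_map (T i) euclideanreal (\<lambda>y. a \<bullet> block_moment i y)"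
  unfolding inner_block_moment
  using continuous_g by (intro continuous_map_sum continuous_map_real_mult_left) auto

lemma inner_block_moment_eq_integral_if_mean_maximizes:
  assumes max: "\<And>x. x \<in> PiE {..<N} M \<Longrightarrow> a \<bullet> moment x \<le> a \<bullet> mean_moment"
    and i: "i < N" and y: "y \<in> M i"
  shows "a \<bullet> block_moment i y = (\<integral>z. a \<bullet> block_moment i z \<partial>\<mu> i)"
proof -
  let ?\<phi> = "\<lambda>i z. a \<bullet> block_moment i z"
  have le: "?\<phi> i z \<le> (\<integral>z. ?\<phi> i z \<partial>\<mu> i)" if "z \<in> M i" for z
  proof (rule le_integral_if_sum_le_sum_integrals[of "{..<N}" \<mu> M ?\<phi>])
    show "(\<Sum>j<N. ?\<phi> j (x j)) \<le> (\<Sum>j<N. \<integral>z. ?\<phi> j z \<partial>\<mu> j)"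
      if "x \<in> PiE {..<N} M" for x
      using max[OF that] by (simp only: inner_moment inner_mean_moment)
  qed (use prob space_eq integrable_inner_block_moment i that in auto)
  have "AE z in \<mu> i. ?\<phi> i z = (\<integral>z. ?\<phi> i z \<partial>\<mu> i)"
    by (rule prob_space.AE_eq_integral_if_le_integral[OF prob[OF i] integrable_inner_block_moment[OF i]])
      (use le space_eq[OF i] in simp)
  moreover have "y \<in> measure_support (T i) (\<mu> i)" using full_support[OF i] y by simp
  ultimately show ?thesis
    using eq_on_measure_support_if_AE_eq[of "T i" "\<mu> i" "?\<phi> i"] openin_sets[OF i]
      continuous_inner_block_moment
    by blast
qed

lemma moment_hull_in_hyperplane_if_mean_maximizes:
  assumes max: "\<And>x. x \<in> PiE {..<N} M \<Longrightarrow> a \<bullet> moment x \<le> a \<bullet> mean_moment"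
    and v: "v \<in> convex hull (moment ` PiE {..<N} M)"
  shows "a \<bullet> v = a \<bullet> mean_moment"
proof -
  have "a \<bullet> moment x = a \<bullet> mean_moment" if "x \<in> PiE {..<N} M" for x
    unfolding inner_moment inner_mean_moment
    using inner_block_moment_eq_integral_if_mean_maximizes[OF max] that
    by (intro sum.cong refl) (simp add: PiE_mem)
  then have "convex hull (moment ` PiE {..<N} M) \<subseteq> {v. a \<bullet> v = a \<bullet> mean_moment}"
    by (intro hull_minimal) (auto simp: convex_hyperplane)
  then show ?thesis using v by auto
qed

lemma mean_moment_in_rel_interior:
  "mean_moment \<in> rel_interior (convex hull (moment ` PiE {..<N} M))"
proof (rule in_rel_interior_if_no_proper_supporting_hyperplane)
  fix a
  assume le: "\<forall>v\<in>convex hull (moment ` PiE {..<N} M). a \<bullet> v \<le> a \<bullet> mean_moment"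
  have "a \<bullet> moment x \<le> a \<bullet> mean_moment" if "x \<in> PiE {..<N} M" for x
    using le hull_inc[OF imageI[OF that]] by blast
  then show "\<forall>v\<in>convex hull (moment ` PiE {..<N} M). a \<bullet> v = a \<bullet> mean_moment"
    using moment_hull_in_hyperplane_if_mean_maximizes by blast
qed (use PiE_nonempty in auto)

lemma mean_moment_in_interior:
  assumes affine_basis: "\<And>i. i < N \<Longrightarrow> \<exists>xs. (\<forall>j\<le>card {k. owner k = i}. xs j \<in> M i)
      \<and> inj_on (\<lambda>j. block_moment i (xs j)) {..card {k. owner k = i}}
      \<and> \<not> affine_dependent ((\<lambda>j. block_moment i (xs j)) ` {..card {k. owner k = i}})"
  shows "mean_moment \<in> interior (convex hull (moment ` PiE {..<N} M))"
proof -
  let ?K = "convex hull (moment ` PiE {..<N} M)"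
  have "interior ?K \<noteq> {}"
  proof
    assume "interior ?K = {}"
    then obtain a b where "a \<noteq> 0" and hyperplane: "?K \<subseteq> {v. a \<bullet> v = b}"
      by (rule empty_interior_subset_hyperplane[OF convex_convex_hull])
    have "mean_moment \<in> ?K"
      using mean_moment_in_rel_interior rel_interior_subset by blast
    then have max: "a \<bullet> moment x \<le> a \<bullet> mean_moment" if "x \<in> PiE {..<N} M" for x
      using hyperplane hull_inc[OF imageI[OF that], of moment convex]
      by (metis (mono_tags) mem_Collect_eq order.refl subsetD)
    have "a $ k = 0" for k
    proof -
      let ?n = "card {k'. owner k' = owner k}"
      obtain xs where xs: "\<forall>j\<le>?n. xs j \<in> M (owner k)"
          "inj_on (\<lambda>j. block_moment (owner k) (xs j)) {..?n}"
          "\<not> affine_dependent ((\<lambda>j. block_moment (owner k) (xs j)) ` {..?n})"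
        using affine_basis[OF owner_less] by blast
      have "(\<lambda>j. block_moment (owner k) (xs j)) ` {..?n}
          \<subseteq> block_moment (owner k) ` M (owner k)"
        using xs(1) by auto
      from zero_on_block_if_inner_block_moment_const[OF this xs(3) _
          inner_block_moment_eq_integral_if_mean_maximizes[OF max owner_less]]
      show ?thesis using card_image[OF xs(2)] by simp
    qed
    with \<open>a \<noteq> 0\<close> show False by (simp add: vec_eq_iff)
  qed
  then show ?thesis
    using mean_moment_in_rel_interior rel_interior_nonempty_interior by blast
qed

end

theorem proposition2p15:
  fixes N :: nat
    and M :: "nat \<Rightarrow> 'a set"
    and d :: "nat \<Rightarrow> 'a \<Rightarrow> 'a \<Rightarrow> real"
    and \<mu> :: "nat \<Rightarrow> 'a measure"
    and f :: "(nat \<Rightarrow> 'a) \<Rightarrow> real"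
    and h :: "nat \<Rightarrow> 'a \<Rightarrow> real"
    and owner :: "'m::finite \<Rightarrow> nat"
    and g :: "'m \<Rightarrow> 'a \<Rightarrow> real"
  assumes polish: "\<And>i. i < N \<Longrightarrow> polish_metric (M i) (d i)"
    and mu: "\<And>i. i < N \<Longrightarrow> P1 (M i) (d i) (\<mu> i)"
    and f_lsc: "lsc_on (product_topology (\<lambda>i. Metric_space.mtopology (M i) (d i)) {..<N}) f"
    and h_usc: "\<And>i. i < N \<Longrightarrow> usc_on (Metric_space.mtopology (M i) (d i)) (h i)"
    and h_int: "\<And>i. i < N \<Longrightarrow> integrable (\<mu> i) (h i)"
    and h_le: "\<And>x. x \<in> PiE {..<N} M \<Longrightarrow> (\<Sum>i<N. h i (x i)) \<le> f x"
    and owner: "\<And>k. owner k < N"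
    and g_int: "\<And>k. integrable (\<mu> (owner k)) (g k)"
  defines "gblock \<equiv> (\<lambda>i (y::'a). (\<chi> k. if owner k = i then g k y else 0) :: real ^ 'm)"
    and "mblock \<equiv> (\<lambda>i. card {k. owner k = i})"
    and "gbar \<equiv> ((\<chi> k. integral\<^sup>L (\<mu> (owner k)) (g k)) :: real ^ 'm)"
    and "K \<equiv> convex hull ((\<lambda>x. (\<chi> k. g k (x (owner k))) :: real ^ 'm) ` PiE {..<N} M)"
    and "C \<equiv> convex_cone hull ((\<lambda>x. (1::real, (\<chi> k. g k (x (owner k))) :: real ^ 'm, f x)) ` PiE {..<N} M)"
  shows
    "((\<forall>i<N. measure_support (Metric_space.mtopology (M i) (d i)) (\<mu> i) = M i)
        \<and> (\<forall>k. continuous_map (Metric_space.mtopology (M (owner k)) (d (owner k))) euclideanreal (g k))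
        \<longrightarrow> gbar \<in> rel_interior K)
   \<and> ((\<forall>i<N. measure_support (Metric_space.mtopology (M i) (d i)) (\<mu> i) = M i)
        \<and> (\<forall>k. continuous_map (Metric_space.mtopology (M (owner k)) (d (owner k))) euclideanreal (g k))
        \<and> (\<forall>i<N. \<exists>xs :: nat \<Rightarrow> 'a. (\<forall>j\<le>mblock i. xs j \<in> M i)
               \<and> inj_on (\<lambda>j. gblock i (xs j)) {..mblock i}
               \<and> \<not> affine_dependent ((\<lambda>j. gblock i (xs j)) ` {..mblock i}))
        \<longrightarrow> gbar \<in> interior K)
   \<and> ((\<forall>i<N. compact_space (Metric_space.mtopology (M i) (d i)))
        \<and> (\<forall>k. continuous_map (Metric_space.mtopology (M (owner k)) (d (owner k))) euclideanreal (g k))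
        \<and> continuous_map (product_topology (\<lambda>i. Metric_space.mtopology (M i) (d i)) {..<N}) euclideanreal f
        \<longrightarrow> closed C)"
proof -
  let ?T = "\<lambda>i. Metric_space.mtopology (M i) (d i)"
  let ?supp = "\<forall>i<N. measure_support (?T i) (\<mu> i) = M i"
  let ?cont = "\<forall>k. continuous_map (?T (owner k)) euclideanreal (g k)"
  interpret moment_problem N M ?T \<mu> owner g
    using polish mu owner g_int by (rule moment_problem_mtopology)
  have supported: "supported_moment_problem N M ?T \<mu> owner g" if ?supp ?cont
    using that by (intro supported_moment_problem.intro moment_problem_axioms
        supported_moment_problem_axioms.intro) auto
  have defs: "gbar = mean_moment" "gblock = block_moment" "K = convex hull (moment ` PiE {..<N} M)"
      "C = convex_cone hull ((\<lambda>x. (1, moment x, f x)) ` PiE {..<N} M)"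
    by (simp_all add: gbar_def gblock_def K_def C_def fun_eq_iff
        mean_moment_def block_moment_def moment_def[abs_def])
  show ?thesis
    unfolding defs mblock_def
    using supported_moment_problem.mean_moment_in_rel_interior[OF supported]
      supported_moment_problem.mean_moment_in_interior[OF supported]
      closed_lifted_moment_cone
    by blast
qed

end
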